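(* Let $\Omega$ be a domain in $\mathbb{C}^{n+m}$ with coordinates $(z,w)$, let $p(z,w)=w$, $q(z,w)=z$, $D\coloneqq p(\Omega)$ and $\Omega_w\coloneqq p^{-1}(w)\cap\Omega$ for $w\in D$. Let $\xi(\cdot)=(\xi_\alpha(\cdot))_{\alpha\in\mathbb{N}^n}$ be a functional-valued function on $D$ with $\xi(w)\in\ell_1^{(n)}$ for all $w\in D$. Suppose $\xi(\cdot)$ satisfies the locally uniformly bounded property near some $w_0\in D$ and each $\xi_\alpha(\cdot)$ is continuous at $w_0$. Let $(z_0,w_0)\in\Omega$ and let $V\subset\subset q(\Omega_{w_0})$ be an open set with $z_0\in V$. Let $\{(z_j,w_j)\}\subset\Omega$ with $z_j\in V$ for all $j\in\mathbb{Z}_+$ and $(z_j,w_j)\to(z_0,w_0)$. If $f_j$ is holomorphic on $q(\Omega_{w_j})$ for each $j$ and $f_j$ converges uniformly on compact subsets of $V$ to $f\in\mathcal{O}(V)$, then $\lim_{j\to+\infty}(\xi(w_j)\cdot f_j)(z_j)=(\xi(w_0)\cdot f)(z_0)$.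
   Context: $\mathbb{N}=\mathbb{Z}_{\ge 0}$. $\ell_1^{(n)}$ is the space of sequences $\xi=(\xi_\alpha)_{\alpha\in\mathbb{N}^n}$ of complex numbers with $\sum_{\alpha}|\xi_\alpha|\rho^{|\alpha|}<+\infty$ for every $\rho>0$. For a holomorphic germ $F$ at $z_0\in\mathbb{C}^n$, $(\xi\cdot F)(z_0)\coloneqq\sum_\alpha \xi_\alpha F^{(\alpha)}(z_0)/\alpha!$. $\xi(\cdot)$ satisfies the locally uniformly bounded property near $w_0$ if for every $\rho>0$ there is a neighborhood $V'$ of $w_0$ with $\sup_{w'\in V'}\sum_\alpha|\xi_\alpha(w')|\rho^{|\alpha|}<+\infty$. *)

theory Defs
  imports "HOL-Analysis.Analysis"
begin

text \<open>Points of C^n are represented as vectors of type complex^'n ('n a finite type with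
  CARD('n) = n). Multi-indices alpha in N^n are functions 'n => nat.\<close>

definition mi_abs :: "('n::finite \<Rightarrow> nat) \<Rightarrow> nat" where
  "mi_abs \<alpha> = (\<Sum>i\<in>UNIV. \<alpha> i)"

definition mi_fact :: "('n::finite \<Rightarrow> nat) \<Rightarrow> nat" where
  "mi_fact \<alpha> = (\<Prod>i\<in>UNIV. fact (\<alpha> i))"

text \<open>Holomorphy on an open subset of C^n: complex (Frechet) differentiability,
  i.e. real differentiability with a complex-linear derivative.\<close>

definition holo_on :: "(complex^'n::finite \<Rightarrow> complex) \<Rightarrow> (complex^'n) set \<Rightarrow> bool" where
  "holo_on F U \<longleftrightarrow> (\<forall>z\<in>U. \<exists>L. (F has_derivative L) (at z) \<and>
      (\<forall>v. L (\<chi> k. \<i> * v $ k) = \<i> * L v))"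

definition cpartial :: "'n::finite \<Rightarrow> (complex^'n \<Rightarrow> complex) \<Rightarrow> complex^'n \<Rightarrow> complex" where
  "cpartial i F z = deriv (\<lambda>t. F (\<chi> k. if k = i then t else z $ k)) (z $ i)"

text \<open>Iterated partial derivative F^(alpha); the order in which the coordinates are
  differentiated is immaterial for holomorphic F.\<close>

fun mderiv_aux :: "nat \<Rightarrow> ('n::finite \<Rightarrow> nat) \<Rightarrow> (complex^'n \<Rightarrow> complex) \<Rightarrow> complex^'n \<Rightarrow> complex" where
  "mderiv_aux 0 \<alpha> F = F"
| "mderiv_aux (Suc k) \<alpha> F =
     (if \<alpha> = (\<lambda>_. 0) then F
      else (let i = (SOME i. 0 < \<alpha> i) in mderiv_aux k (\<alpha>(i := \<alpha> i - 1)) (cpartial i F)))"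

definition mderiv :: "('n::finite \<Rightarrow> nat) \<Rightarrow> (complex^'n \<Rightarrow> complex) \<Rightarrow> complex^'n \<Rightarrow> complex" where
  "mderiv \<alpha> F = mderiv_aux (mi_abs \<alpha>) \<alpha> F"

definition ell1 :: "(('n::finite \<Rightarrow> nat) \<Rightarrow> complex) set" where
  "ell1 = {\<xi>. \<forall>\<rho>>0. (\<lambda>\<alpha>. norm (\<xi> \<alpha>) * \<rho> ^ mi_abs \<alpha>) summable_on UNIV}"

definition act :: "(('n::finite \<Rightarrow> nat) \<Rightarrow> complex) \<Rightarrow> (complex^'n \<Rightarrow> complex) \<Rightarrow> complex^'n \<Rightarrow> complex" where
  "act \<xi> F z0 = (\<Sum>\<^sub>\<infinity>\<alpha>. \<xi> \<alpha> * mderiv \<alpha> F z0 / of_nat (mi_fact \<alpha>))"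

definition loc_unif_bdd ::
  "('w::topological_space \<Rightarrow> ('n::finite \<Rightarrow> nat) \<Rightarrow> complex) \<Rightarrow> 'w set \<Rightarrow> 'w \<Rightarrow> bool" where
  "loc_unif_bdd \<xi> D w0 \<longleftrightarrow> (\<forall>\<rho>>0. \<exists>V'. open V' \<and> w0 \<in> V' \<and>
      (\<exists>B. \<forall>w'\<in>V' \<inter> D. (\<Sum>\<^sub>\<infinity>\<alpha>. norm (\<xi> w' \<alpha>) * \<rho> ^ mi_abs \<alpha>) \<le> B))"

end

theory Submission
  imports Defs "HOL-Complex_Analysis.Cauchy_Integral_Formula"
begin

text \<open>Choose a polydisc P about z0 and a ball W about w0 with P \<times> W \<subseteq> \<Omega> and P \<subseteq> V. For
  large j the f_j are then defined on P and converge uniformly to f there. Iterating the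
  one-variable Cauchy integral formula coordinatewise gives the Cauchy estimates
  |D^\<alpha> g(z)| \<le> \<alpha>! sup_P |g| / r^|\<alpha>| on a smaller polydisc. Applied to f_j - f they show that
  each D^\<alpha> f_j(z_j) tends to D^\<alpha> f(z0); applied to f_j they bound the \<alpha>-th term of the series
  (\<xi>(w_j) \<cdot> f_j)(z_j) by a constant times |\<xi>_\<alpha>(w_j)| r^-|\<alpha>|. The locally uniform bound with
  \<rho> = 2/r then makes all tails beyond |\<alpha>| = N smaller than a constant times 2^-N, uniformly
  in j, so the series converge termwise.\<close>

section \<open>Polydiscs and separately holomorphic functions\<close>

definition vec_upd :: "'a^'n::finite \<Rightarrow> 'n \<Rightarrow> 'a \<Rightarrow> 'a^'n" where
  "vec_upd z i t = (\<chi> k. if k = i then t else z$k)"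

lemma vec_upd_nth [simp]: "vec_upd z i t $ k = (if k = i then t else z$k)"
  by (simp add: vec_upd_def)

lemma vec_upd_upd_same [simp]: "vec_upd (vec_upd z i s) i t = vec_upd z i t"
  by (simp add: vec_eq_iff)

lemma vec_upd_self [simp]: "vec_upd z i (z$i) = z"
  by (simp add: vec_eq_iff)

lemma vec_upd_commute: "i \<noteq> j \<Longrightarrow> vec_upd (vec_upd z i s) j t = vec_upd (vec_upd z j t) i s"
  by (simp add: vec_eq_iff)

lemma continuous_on_vec_upd [continuous_intros]:
  assumes "continuous_on S f" "continuous_on S g"
  shows "continuous_on S (\<lambda>x. vec_upd (f x) i (g x))"
proof -
  have "continuous_on S (\<lambda>x. if k = i then g x else f x $ k)" for k
    using assms by (cases "k = i") (auto intro!: continuous_intros)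
  then show ?thesis
    unfolding vec_upd_def by (rule continuous_on_vec_lambda)
qed

lemma cpartial_eq_deriv: "cpartial i F z = deriv (\<lambda>t. F (vec_upd z i t)) (z$i)"
  by (simp add: cpartial_def vec_upd_def)

lemma cpartial_slice: "(\<lambda>t. cpartial i F (vec_upd z i t)) = deriv (\<lambda>t. F (vec_upd z i t))"
  by (simp add: cpartial_eq_deriv)

lemma cpartial_iter_slice:
  "(\<lambda>t. (cpartial i ^^ a) F (vec_upd z i t)) = (deriv ^^ a) (\<lambda>t. F (vec_upd z i t))"
  by (induction a) (simp_all add: cpartial_slice)

definition polydisc :: "complex^'n::finite \<Rightarrow> real \<Rightarrow> (complex^'n) set" where
  "polydisc c R = {z. \<forall>k. z$k \<in> ball (c$k) R}"

lemma vec_upd_in_polydisc_iff: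
  "z \<in> polydisc c R \<Longrightarrow> vec_upd z i t \<in> polydisc c R \<longleftrightarrow> t \<in> ball (c$i) R"
  by (auto simp: polydisc_def)

lemma open_polydisc: "open (polydisc c R)"
proof -
  have "polydisc c R = (\<Inter>k. (\<lambda>z. z$k) -` ball (c$k) R)"
    by (auto simp: polydisc_def)
  then show ?thesis
    by (auto intro!: open_vimage continuous_intros)
qed

lemma polydisc_mono: "R' \<le> R \<Longrightarrow> polydisc c R' \<subseteq> polydisc c R"
  by (force simp: polydisc_def intro: less_le_trans)

lemma center_in_polydisc: "0 < R \<Longrightarrow> c \<in> polydisc c R"
  by (simp add: polydisc_def)

lemma in_smaller_polydisc:
  assumes "z \<in> polydisc c R"
  obtains r where "0 < r" "z \<in> polydisc c (R - r)"
proof -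
  define m where "m = Max (range (\<lambda>k. dist (c$k) (z$k)))"
  have "m \<in> range (\<lambda>k. dist (c$k) (z$k))"
    unfolding m_def by (rule Max_in) auto
  then have "m < R"
    using assms by (auto simp: polydisc_def)
  have le_m: "dist (c$k) (z$k) \<le> m" for k
    unfolding m_def by (rule Max_ge) auto
  have "dist (c$k) (z$k) < R - (R - m) / 2" for k
    using le_m[of k] \<open>m < R\<close> by argo
  with \<open>m < R\<close> show thesis
    by (intro that[of "(R - m) / 2"]) (auto simp: polydisc_def)
qed

lemma polydisc_subset_cball: "polydisc c R \<subseteq> cball c (real CARD('n) * R)"
  for c :: "complex^'n::finite"
proof
  fix z assume z: "z \<in> polydisc c R"
  have "dist c z = L2_set (\<lambda>i. norm ((c - z)$i)) UNIV"
    by (simp add: dist_norm norm_vec_def)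
  also have "\<dots> \<le> (\<Sum>i\<in>UNIV. norm ((c - z)$i))"
    by (rule L2_set_le_sum) auto
  also have "\<dots> \<le> (\<Sum>i\<in>(UNIV::'n set). R)"
    using z by (intro sum_mono) (auto simp: polydisc_def dist_norm less_imp_le)
  finally show "z \<in> cball c (real CARD('n) * R)"
    by simp
qed

text \<open>By Osgood's lemma this is equivalent to holomorphy; unlike holo_on it is visibly preserved
  by partial differentiation, through the one-variable Cauchy formula.\<close>

definition sep_holomorphic_on :: "(complex^'n::finite \<Rightarrow> complex) \<Rightarrow> (complex^'n) set \<Rightarrow> bool" where
  "sep_holomorphic_on F S \<longleftrightarrow> continuous_on S F \<and>
     (\<forall>z\<in>S. \<forall>i. (\<lambda>t. F (vec_upd z i t)) field_differentiable at (z$i))"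

lemma sep_holomorphic_on_subset:
  "sep_holomorphic_on F S \<Longrightarrow> T \<subseteq> S \<Longrightarrow> sep_holomorphic_on F T"
  by (auto simp: sep_holomorphic_on_def intro: continuous_on_subset)

lemma sep_holomorphic_on_const: "sep_holomorphic_on (\<lambda>_. c) S"
  by (simp add: sep_holomorphic_on_def)

lemma holomorphic_on_polydisc_slice:
  assumes "sep_holomorphic_on F (polydisc c R)" "z \<in> polydisc c R"
  shows "(\<lambda>t. F (vec_upd z i t)) holomorphic_on ball (c$i) R"
  unfolding holomorphic_on_def
proof
  fix t assume "t \<in> ball (c$i) R"
  then have "vec_upd z i t \<in> polydisc c R"
    using assms(2) by (simp add: vec_upd_in_polydisc_iff)
  then have "(\<lambda>s. F (vec_upd (vec_upd z i t) i s)) field_differentiable at (vec_upd z i t $ i)"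
    using assms(1) unfolding sep_holomorphic_on_def by blast
  then show "(\<lambda>t. F (vec_upd z i t)) field_differentiable at t within ball (c$i) R"
    by (simp add: field_differentiable_at_within)
qed

text \<open>A complex-linear map restricted to a coordinate line is multiplication by a scalar.\<close>

lemma holo_on_slice_field_differentiable:
  fixes F :: "complex^'n::finite \<Rightarrow> complex"
  assumes "holo_on F U" "z \<in> U"
  shows "(\<lambda>t. F (vec_upd z i t)) field_differentiable at (z$i)"
proof -
  obtain L where L: "(F has_derivative L) (at z)" "\<And>v. L (\<chi> k. \<i> * v $ k) = \<i> * L v"
    using assms unfolding holo_on_def by blast
  have "linear L"
    using L(1) has_derivative_linear by blast
  have "linear (axis i :: complex \<Rightarrow> complex^'n)"
    by (rule linearI) (auto simp: vec_eq_iff axis_def)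
  then have "((\<lambda>t. vec_upd z i 0 + axis i t) has_derivative axis i) (at (z$i))"
    by (auto intro!: derivative_eq_intros bounded_linear_imp_has_derivative
        simp: linear_conv_bounded_linear)
  moreover have "(\<lambda>t. vec_upd z i 0 + axis i t) = vec_upd z i"
    by (auto simp: fun_eq_iff vec_eq_iff axis_def)
  ultimately have "(vec_upd z i has_derivative axis i) (at (z$i))"
    by simp
  from has_derivative_compose[OF this, of F L]
  have "((\<lambda>t. F (vec_upd z i t)) has_derivative (\<lambda>h. L (axis i h))) (at (z$i))"
    using L(1) by simp
  moreover have "L (axis i h) = L (axis i 1) * h" for h
  proof -
    have "axis i h = Re h *\<^sub>R axis i 1 + Im h *\<^sub>R (\<chi> k. \<i> * axis i 1 $ k)"
      by (simp add: vec_eq_iff axis_def)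
        (use complex_eq[of h] in \<open>simp add: scaleR_conv_of_real mult.commute\<close>)
    then have "L (axis i h) = Re h *\<^sub>R L (axis i 1) + Im h *\<^sub>R (\<i> * L (axis i 1))"
      using L(2) \<open>linear L\<close> by (simp add: linear_add linear_scale)
    also have "\<dots> = (of_real (Re h) + \<i> * of_real (Im h)) * L (axis i 1)"
      by (simp add: scaleR_conv_of_real algebra_simps)
    finally show ?thesis
      by (simp only: complex_eq[symmetric] mult.commute)
  qed
  ultimately show ?thesis
    unfolding field_differentiable_def has_field_derivative_def
    by (metis (no_types) ext mult.commute)
qed

lemma holo_on_imp_sep_holomorphic_on: "holo_on F U \<Longrightarrow> sep_holomorphic_on F U"
  unfolding sep_holomorphic_on_def
  by (metis holo_on_def has_derivative_continuous continuous_at_imp_continuous_on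
      holo_on_slice_field_differentiable)

section \<open>The Cauchy formula in one variable\<close>

definition circle_param :: "real \<Rightarrow> complex" where
  "circle_param t = exp (2 * of_real pi * \<i> * of_real t)"

lemma circle_param_nonzero [simp]: "circle_param t \<noteq> 0"
  by (simp add: circle_param_def)

lemma norm_circle_param [simp]: "norm (circle_param t) = 1"
  unfolding circle_param_def
  by (metis norm_exp_i_times mult.commute mult.left_commute of_real_mult of_real_numeral)

lemma continuous_on_circle_param [continuous_intros]:
  "continuous_on S f \<Longrightarrow> continuous_on S (\<lambda>x. circle_param (f x))"
  unfolding circle_param_def by (auto intro!: continuous_intros)

text \<open>Cauchy's formula for the a-th derivative in the i-th variable over the circle of radius r
  about z$i, in the parametrisation of circlepath.\<close>

definition cauchy_integrand ::
  "(complex^'n::finite \<Rightarrow> complex) \<Rightarrow> 'n \<Rightarrow> nat \<Rightarrow> real \<Rightarrow> complex^'n \<Rightarrow> real \<Rightarrow> complex" where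
  "cauchy_integrand F i a r z t =
     fact a / of_real r ^ a * F (vec_upd z i (z$i + of_real r * circle_param t)) / circle_param t ^ a"

lemma circle_point_in_polydisc:
  assumes "z \<in> polydisc c (R - r)" "0 < r"
  shows "vec_upd z i (z$i + of_real r * circle_param t) \<in> polydisc c R"
proof -
  have "dist (z$i) (z$i + of_real r * circle_param t) = r"
    using assms(2) by (simp add: dist_norm norm_mult)
  then have "dist (c$i) (z$i + of_real r * circle_param t) \<le> dist (c$i) (z$i) + r"
    using dist_triangle[of "c$i" "z$i + of_real r * circle_param t" "z$i"] by simp
  moreover have "dist (c$i) (z$i) < R - r" "z \<in> polydisc c R"
    using assms polydisc_mono[of "R - r" R c] by (auto simp: polydisc_def)
  ultimately show ?thesis
    by (simp add: vec_upd_in_polydisc_iff)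
qed

lemma cpartial_iter_eq_integral:
  assumes F: "sep_holomorphic_on F (polydisc c R)" and r: "0 < r" and z: "z \<in> polydisc c (R - r)"
  shows "(cpartial i ^^ a) F z = integral {0..1} (cauchy_integrand F i a r z)"
proof -
  define g where "g = (\<lambda>t. F (vec_upd z i t))"
  have "dist (c$i) (z$i) < R - r"
    using z by (simp add: polydisc_def)
  then have "cball (z$i) r \<subseteq> ball (c$i) R"
    by (simp add: cball_subset_ball_iff dist_commute)
  moreover have "g holomorphic_on ball (c$i) R"
    unfolding g_def using z r polydisc_mono[of "R - r" R c]
    by (intro holomorphic_on_polydisc_slice[OF F]) auto
  ultimately have "continuous_on (cball (z$i) r) g" "g holomorphic_on ball (z$i) r"
    by (meson holomorphic_on_imp_continuous_on continuous_on_subset holomorphic_on_subset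
        ball_subset_cball subset_trans)+
  then have "((\<lambda>u. g u / (u - z$i) ^ Suc a) has_contour_integral
      (2 * pi * \<i>) / fact a * (deriv ^^ a) g (z$i))  (circlepath (z$i) r)"
    by (rule Cauchy_has_contour_integral_higher_derivative_circlepath) (use r in simp)
  moreover have "contour_integral (circlepath (z$i) r) (\<lambda>u. g u / (u - z$i) ^ Suc a)
      = integral {0..1} (\<lambda>t. (2 * pi * \<i>) / fact a * cauchy_integrand F i a r z t)"
    unfolding contour_integral_integral vector_derivative_circlepath
    unfolding circlepath circle_param_def[symmetric]
    using r by (intro integral_cong) (simp add: cauchy_integrand_def g_def field_simps)
  ultimately have "(deriv ^^ a) g (z$i) = integral {0..1} (cauchy_integrand F i a r z)"
    by (auto dest!: contour_integral_unique simp: integral_mult_right)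
  then show ?thesis
    by (simp add: g_def flip: cpartial_iter_slice[where i=i and a=a and F=F and z=z])
qed

lemma continuous_on_cauchy_integrand:
  assumes "continuous_on (polydisc c R) F" "0 < r"
  shows "continuous_on (polydisc c (R - r) \<times> {0..1}) (\<lambda>(z, t). cauchy_integrand F i a r z t)"
proof -
  have "continuous_on (polydisc c (R - r) \<times> {0..1})
      (\<lambda>x. F (vec_upd (fst x) i (fst x $ i + of_real r * circle_param (snd x))))"
    using circle_point_in_polydisc[OF _ assms(2)]
    by (intro continuous_on_compose2[OF assms(1)]) (auto intro!: continuous_intros)
  then show ?thesis
    unfolding cauchy_integrand_def split_beta using assms(2) by (auto intro!: continuous_intros)
qed

lemma integrable_cauchy_integrand:
  assumes "continuous_on (polydisc c R) F" "0 < r" "z \<in> polydisc c (R - r)"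
  shows "cauchy_integrand F i a r z integrable_on {0..1}"
proof -
  have "continuous_on (Pair z ` {0..1}) (\<lambda>(z, t). cauchy_integrand F i a r z t)"
    using assms(3) by (intro continuous_on_subset[OF continuous_on_cauchy_integrand[OF assms(1,2)]]) auto
  then have "continuous_on {0..1} ((\<lambda>(z, t). cauchy_integrand F i a r z t) \<circ> Pair z)"
    by (intro continuous_on_compose continuous_intros)
  then have "continuous_on {0..1} (cauchy_integrand F i a r z)"
    by (simp add: o_def)
  then show ?thesis
    by (rule integrable_continuous_real)
qed

lemma continuous_on_cpartial:
  assumes F: "sep_holomorphic_on F (polydisc c R)"
  shows "continuous_on (polydisc c R) (cpartial i F)"
proof -
  have "isCont (cpartial i F) z" if z: "z \<in> polydisc c R" for z
  proof -
    obtain r where r: "0 < r" "z \<in> polydisc c (R - r)"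
      using in_smaller_polydisc[OF z] .
    have "continuous_on (polydisc c (R - r)) (\<lambda>z. integral (cbox 0 1) (cauchy_integrand F i 1 r z))"
      using F r(1) unfolding sep_holomorphic_on_def
      by (intro integral_continuous_on_param) (simp add: continuous_on_cauchy_integrand)
    then have "continuous_on (polydisc c (R - r)) (cpartial i F)"
      by (rule continuous_on_eq) (use cpartial_iter_eq_integral[OF F r(1), where i=i and a=1] in auto)
    then show ?thesis
      using r(2) open_polydisc continuous_on_eq_continuous_at by blast
  qed
  then show ?thesis
    by (simp add: continuous_at_imp_continuous_on)
qed

text \<open>Holomorphy of the i-th partial derivative in another variable j comes from differentiating
  its Cauchy integral in the i-th variable under the integral sign.\<close>

lemma holomorphic_on_integral_cauchy_integrand:
  assumes F: "sep_holomorphic_on F (polydisc c R)" and r: "0 < r" and z: "z \<in> polydisc c (R - r)"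
    and "j \<noteq> i"
  shows "(\<lambda>s. integral (cbox 0 1) (cauchy_integrand F i 1 r (vec_upd z j s)))
    holomorphic_on ball (c$j) (R - r)"
proof -
  define w where "w t = vec_upd z i (z$i + of_real r * circle_param t)" for t
  have w: "w t \<in> polydisc c R" for t
    unfolding w_def by (rule circle_point_in_polydisc[OF z r])
  have integrand: "cauchy_integrand F i 1 r (vec_upd z j s) t
      = F (vec_upd (w t) j s) / (of_real r * circle_param t)" for s t
    unfolding cauchy_integrand_def w_def using \<open>j \<noteq> i\<close> by (simp add: vec_upd_commute)
  show ?thesis
  proof (rule leibniz_rule_holomorphic[OF _ _ _ convex_ball])
    fix s t assume s: "s \<in> ball (c$j) (R - r)"
    have "s \<in> ball (c$j) R"
      using s r by auto
    then have "((\<lambda>s. F (vec_upd (w t) j s)) has_field_derivative cpartial j F (vec_upd (w t) j s))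
        (at s within ball (c$j) (R - r))"
      using holomorphic_derivI[OF holomorphic_on_polydisc_slice[OF F w] open_ball]
      by (simp add: cpartial_eq_deriv)
    then show "((\<lambda>s. cauchy_integrand F i 1 r (vec_upd z j s) t) has_field_derivative
        cpartial j F (vec_upd (w t) j s) / (of_real r * circle_param t)) (at s within ball (c$j) (R - r))"
      unfolding integrand by (rule DERIV_cdivide)
  next
    fix s assume "s \<in> ball (c$j) (R - r)"
    then show "cauchy_integrand F i 1 r (vec_upd z j s) integrable_on cbox 0 1"
      using F r z by (auto simp: sep_holomorphic_on_def vec_upd_in_polydisc_iff
          intro!: integrable_cauchy_integrand)
  next
    have "continuous_on (ball (c$j) (R - r) \<times> cbox 0 1) (\<lambda>x. cpartial j F (vec_upd (w (snd x)) j (fst x)))"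
      using w r
      by (intro continuous_on_compose2[OF continuous_on_cpartial[OF F]])
        (auto simp: w_def vec_upd_in_polydisc_iff intro!: continuous_intros)
    then show "continuous_on (ball (c$j) (R - r) \<times> cbox 0 1)
        (\<lambda>(s, t). cpartial j F (vec_upd (w t) j s) / (of_real r * circle_param t))"
      unfolding split_beta using r by (auto intro!: continuous_intros)
  qed
qed

lemma holomorphic_on_cpartial_slice:
  assumes F: "sep_holomorphic_on F (polydisc c R)" and r: "0 < r" and z: "z \<in> polydisc c (R - r)"
    and "j \<noteq> i"
  shows "(\<lambda>s. cpartial i F (vec_upd z j s)) holomorphic_on ball (c$j) (R - r)"
  using holomorphic_on_integral_cauchy_integrand[OF assms]
proof (rule holomorphic_transform)
  fix s assume "s \<in> ball (c$j) (R - r)"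
  then have "vec_upd z j s \<in> polydisc c (R - r)"
    using z by (simp add: vec_upd_in_polydisc_iff)
  then show "integral (cbox 0 1) (cauchy_integrand F i 1 r (vec_upd z j s)) = cpartial i F (vec_upd z j s)"
    using cpartial_iter_eq_integral[OF F r, where i=i and a=1] by simp
qed

lemma sep_holomorphic_on_cpartial:
  assumes F: "sep_holomorphic_on F (polydisc c R)"
  shows "sep_holomorphic_on (cpartial i F) (polydisc c R)"
  unfolding sep_holomorphic_on_def
proof (intro conjI ballI allI)
  show "continuous_on (polydisc c R) (cpartial i F)"
    by (rule continuous_on_cpartial[OF F])
next
  fix z j assume z: "z \<in> polydisc c R"
  show "(\<lambda>s. cpartial i F (vec_upd z j s)) field_differentiable at (z$j)"
  proof (cases "j = i")
    case True
    have "deriv (\<lambda>t. F (vec_upd z i t)) holomorphic_on ball (c$i) R"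
      using holomorphic_on_polydisc_slice[OF F z] by (rule holomorphic_deriv) simp
    then show ?thesis
      using True z by (auto simp: cpartial_slice polydisc_def holomorphic_on_imp_differentiable_at)
  next
    case False
    obtain r where r: "0 < r" "z \<in> polydisc c (R - r)"
      using in_smaller_polydisc[OF z] .
    then show ?thesis
      using holomorphic_on_cpartial_slice[OF F r False]
      by (auto simp: polydisc_def holomorphic_on_imp_differentiable_at)
  qed
qed

lemma sep_holomorphic_on_cpartial_iter:
  "sep_holomorphic_on F (polydisc c R) \<Longrightarrow> sep_holomorphic_on ((cpartial i ^^ a) F) (polydisc c R)"
  by (induction a) (simp_all add: sep_holomorphic_on_cpartial)

lemma sep_holomorphic_on_mderiv:
  assumes "sep_holomorphic_on F (polydisc c R)"
  shows "sep_holomorphic_on (mderiv \<alpha> F) (polydisc c R)"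
proof -
  have "sep_holomorphic_on (mderiv_aux k \<alpha> G) (polydisc c R)"
    if "sep_holomorphic_on G (polydisc c R)" for k \<alpha> G
    using that by (induction k arbitrary: \<alpha> G) (simp_all add: Let_def sep_holomorphic_on_cpartial)
  then show ?thesis
    using assms by (simp add: mderiv_def)
qed

section \<open>Cauchy estimates for multi-index derivatives\<close>

lemma norm_cpartial_iter_diff_le:
  assumes F1: "sep_holomorphic_on F1 (polydisc c R)" and F2: "sep_holomorphic_on F2 (polydisc c R)"
    and r: "0 < r" and M: "\<And>z. z \<in> polydisc c R \<Longrightarrow> norm (F1 z - F2 z) \<le> M"
    and z: "z \<in> polydisc c (R - r)"
  shows "norm ((cpartial i ^^ a) F1 z - (cpartial i ^^ a) F2 z) \<le> fact a * M / r ^ a"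
proof -
  have int: "cauchy_integrand F i a r z integrable_on {0..1}"
    if "sep_holomorphic_on F (polydisc c R)" for F
    using that r z by (auto simp: sep_holomorphic_on_def intro!: integrable_cauchy_integrand)
  have "(cpartial i ^^ a) F1 z - (cpartial i ^^ a) F2 z
      = integral {0..1} (\<lambda>t. cauchy_integrand F1 i a r z t - cauchy_integrand F2 i a r z t)"
    using int[OF F1] int[OF F2] by (simp add: cpartial_iter_eq_integral[OF F1 r z] 
        cpartial_iter_eq_integral[OF F2 r z] integral_diff)
  also have "norm \<dots> \<le> integral {0..1} (\<lambda>_::real. fact a * M / r ^ a)"
  proof (rule integral_norm_bound_integral)
    show "(\<lambda>t. cauchy_integrand F1 i a r z t - cauchy_integrand F2 i a r z t) integrable_on {0..1}"
      using int[OF F1] int[OF F2] by (rule integrable_diff)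
  next
    fix t :: real
    define p where "p = vec_upd z i (z$i + of_real r * circle_param t)"
    have "norm (cauchy_integrand F1 i a r z t - cauchy_integrand F2 i a r z t)
        = fact a / r ^ a * norm (F1 p - F2 p)"
      using r by (simp add: cauchy_integrand_def p_def norm_mult norm_divide norm_power
          flip: diff_divide_distrib right_diff_distrib)
    also have "\<dots> \<le> fact a / r ^ a * M"
      using M circle_point_in_polydisc[OF z r] r by (intro mult_left_mono) (auto simp: p_def)
    finally show "norm (cauchy_integrand F1 i a r z t - cauchy_integrand F2 i a r z t) \<le> fact a * M / r ^ a"
      by simp
  qed (rule integrable_const_ivl)
  finally show ?thesis
    by simp
qed

lemma mi_abs_split: "mi_abs \<alpha> = \<alpha> i + mi_abs (\<alpha>(i := 0))"
  unfolding mi_abs_def fun_upd_def by (simp add: sum.delta_remove sum.remove[of UNIV i])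

lemma mi_fact_split: "mi_fact \<alpha> = fact (\<alpha> i) * mi_fact (\<alpha>(i := 0))"
  unfolding mi_fact_def fun_upd_def by (simp add: prod.delta_remove prod.remove[of UNIV i])

lemma mi_fact_pos: "0 < mi_fact \<alpha>"
  unfolding mi_fact_def by (simp add: prod_pos)

text \<open>The SOME in mderiv_aux keeps choosing the same coordinate until its order is exhausted.\<close>

lemma mderiv_aux_block:
  assumes "\<alpha> i = a" "(SOME j. 0 < \<alpha> j) = i" "0 < a"
  shows "mderiv_aux (a + m) \<alpha> F = mderiv_aux m (\<alpha>(i := 0)) ((cpartial i ^^ a) F)"
  using assms
proof (induction a arbitrary: \<alpha> F)
  case 0
  then show ?case by simp
next
  case (Suc a)
  have step: "mderiv_aux (Suc a + m) \<alpha> F = mderiv_aux (a + m) (\<alpha>(i := a)) (cpartial i F)"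
    using Suc.prems by (auto simp: Let_def)
  show ?case
  proof (cases "a = 0")
    case True
    then show ?thesis
      using step by (simp add: fun_upd_def del: mderiv_aux.simps)
  next
    case False
    have "(\<lambda>j. 0 < (\<alpha>(i := a)) j) = (\<lambda>j. 0 < \<alpha> j)"
      using False Suc.prems by auto
    then have "(SOME j. 0 < (\<alpha>(i := a)) j) = i"
      using Suc.prems by simp
    then have "mderiv_aux (a + m) (\<alpha>(i := a)) (cpartial i F)
        = mderiv_aux m ((\<alpha>(i := a))(i := 0)) ((cpartial i ^^ a) (cpartial i F))"
      using False by (intro Suc.IH) auto
    then show ?thesis
      using step by (simp only: funpow_Suc_right o_apply fun_upd_upd)
  qed
qed

lemma mderiv_split:
  assumes "\<alpha> \<noteq> (\<lambda>_. 0)"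
  shows "\<exists>i. 0 < \<alpha> i \<and> (\<forall>F. mderiv \<alpha> F = mderiv (\<alpha>(i := 0)) ((cpartial i ^^ \<alpha> i) F))"
proof -
  define i where "i = (SOME j. 0 < \<alpha> j)"
  have "0 < \<alpha> i"
    unfolding i_def using assms by (intro someI_ex[of "\<lambda>j. 0 < \<alpha> j"]) (auto simp: fun_eq_iff)
  moreover from this have "mderiv \<alpha> F = mderiv (\<alpha>(i := 0)) ((cpartial i ^^ \<alpha> i) F)" for F
    unfolding mderiv_def mi_abs_split[of \<alpha> i] by (intro mderiv_aux_block) (simp_all add: i_def)
  ultimately show ?thesis
    by blast
qed

lemma mderiv_0 [simp]: "mderiv (\<lambda>_. 0) F = F"
  by (simp add: mderiv_def mi_abs_def)

text \<open>Each block of derivatives in a single coordinate is estimated by one Cauchy estimate,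
  which is what produces the factor mi_fact \<alpha>; every block costs a shrinking of the polydisc by r.\<close>

lemma norm_mderiv_diff_le_support:
  fixes R r M :: real
  assumes "sep_holomorphic_on F1 (polydisc c R)" "sep_holomorphic_on F2 (polydisc c R)" "0 < r"
    "\<And>z. z \<in> polydisc c R \<Longrightarrow> norm (F1 z - F2 z) \<le> M"
    "z \<in> polydisc c (R - card {j. 0 < \<alpha> j} * r)"
  shows "norm (mderiv \<alpha> F1 z - mderiv \<alpha> F2 z) \<le> mi_fact \<alpha> * M / r ^ mi_abs \<alpha>"
  using assms
proof (induction "card {j. 0 < \<alpha> j}" arbitrary: \<alpha> F1 F2 R M)
  case 0
  then have "\<alpha> = (\<lambda>_. 0)"
    by (auto simp: fun_eq_iff)
  with 0 show ?case
    by (simp add: mi_fact_def mi_abs_def)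
next
  case (Suc s)
  then have "\<alpha> \<noteq> (\<lambda>_. 0)"
    by auto
  then obtain i where i: "0 < \<alpha> i"
    and split: "\<And>F. mderiv \<alpha> F = mderiv (\<alpha>(i := 0)) ((cpartial i ^^ \<alpha> i) F)"
    using mderiv_split by blast
  have "{j. 0 < (\<alpha>(i := 0)) j} = {j. 0 < \<alpha> j} - {i}"
    by auto
  then have card: "s = card {j. 0 < (\<alpha>(i := 0)) j}"
    using Suc.hyps(2) i by simp
  have "R - real (card {j. 0 < \<alpha> j}) * r = (R - r) - real s * r"
    using Suc.hyps(2)[symmetric] by (simp add: algebra_simps)
  then have z: "z \<in> polydisc c ((R - r) - card {j. 0 < (\<alpha>(i := 0)) j} * r)"
    using Suc.prems(5) unfolding card[symmetric] by (simp only:)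
  have G: "sep_holomorphic_on ((cpartial i ^^ \<alpha> i) F) (polydisc c (R - r))"
    if "sep_holomorphic_on F (polydisc c R)" for F
    using sep_holomorphic_on_cpartial_iter[OF that] polydisc_mono[of "R - r" R c] Suc.prems(3)
    by (auto intro: sep_holomorphic_on_subset)
  have "norm (mderiv (\<alpha>(i := 0)) ((cpartial i ^^ \<alpha> i) F1) z
      - mderiv (\<alpha>(i := 0)) ((cpartial i ^^ \<alpha> i) F2) z)
      \<le> mi_fact (\<alpha>(i := 0)) * (fact (\<alpha> i) * M / r ^ \<alpha> i) / r ^ mi_abs (\<alpha>(i := 0))"
    using Suc.hyps(1)[OF card G[OF Suc.prems(1)] G[OF Suc.prems(2)] Suc.prems(3)
        norm_cpartial_iter_diff_le[OF Suc.prems(1-4)] z] .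
  also have "\<dots> = mi_fact \<alpha> * M / r ^ mi_abs \<alpha>"
    using Suc.prems(3) by (simp add: mi_fact_split[of \<alpha> i] mi_abs_split[of \<alpha> i] power_add field_simps)
  finally show ?case
    by (simp add: split)
qed

lemma norm_mderiv_diff_le:
  fixes c :: "complex^'n::finite" and R r M :: real
  assumes "sep_holomorphic_on F1 (polydisc c R)" "sep_holomorphic_on F2 (polydisc c R)" "0 < r"
    "\<And>z. z \<in> polydisc c R \<Longrightarrow> norm (F1 z - F2 z) \<le> M"
    "(real CARD('n) + 1) * r \<le> R" "z \<in> polydisc c r"
  shows "norm (mderiv \<alpha> F1 z - mderiv \<alpha> F2 z) \<le> mi_fact \<alpha> * M / r ^ mi_abs \<alpha>"
proof (rule norm_mderiv_diff_le_support[OF assms(1-4)])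
  have "card {j. 0 < \<alpha> j} \<le> CARD('n)"
    by (rule card_mono) auto
  then have "real (card {j. 0 < \<alpha> j}) * r \<le> real CARD('n) * r"
    using assms(3) by (intro mult_right_mono) auto
  then have "r \<le> R - card {j. 0 < \<alpha> j} * r"
    using assms(5) by (simp only: distrib_right mult_1_left)
  then show "z \<in> polydisc c (R - card {j. 0 < \<alpha> j} * r)"
    using assms(6) polydisc_mono by blast
qed

lemma mderiv_const_0: "mderiv \<alpha> (\<lambda>_. 0) = (\<lambda>_. 0)"
  for \<alpha> :: "'n::finite \<Rightarrow> nat"
proof -
  have "cpartial i (\<lambda>_. 0) = (\<lambda>_. 0)" for i :: 'n
    by (simp add: cpartial_def fun_eq_iff)
  then have "mderiv_aux k \<alpha> (\<lambda>_. 0) = (\<lambda>_. 0)" for k and \<alpha> :: "'n \<Rightarrow> nat"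
    by (induction k arbitrary: \<alpha>) (simp_all add: Let_def)
  then show ?thesis
    by (simp add: mderiv_def)
qed

lemma norm_mderiv_le:
  fixes c :: "complex^'n::finite" and R r M :: real
  assumes "sep_holomorphic_on F (polydisc c R)" "\<And>z. z \<in> polydisc c R \<Longrightarrow> norm (F z) \<le> M"
    "0 < r" "(real CARD('n) + 1) * r \<le> R" "z \<in> polydisc c r"
  shows "norm (mderiv \<alpha> F z) \<le> mi_fact \<alpha> * M / r ^ mi_abs \<alpha>"
proof -
  have "norm (mderiv \<alpha> F z - mderiv \<alpha> (\<lambda>_. 0) z) \<le> mi_fact \<alpha> * M / r ^ mi_abs \<alpha>"
    by (rule norm_mderiv_diff_le[OF assms(1) sep_holomorphic_on_const assms(3) _ assms(4,5)])
      (simp add: assms(2))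
  then show ?thesis
    by (simp add: mderiv_const_0)
qed

lemma uniform_limit_mderiv:
  fixes c :: "complex^'n::finite" and R r :: real
  assumes fs: "eventually (\<lambda>j. sep_holomorphic_on (fs j) (polydisc c R)) sequentially"
    and f: "sep_holomorphic_on f (polydisc c R)"
    and unif: "uniform_limit (polydisc c R) fs f sequentially"
    and r: "0 < r" "(real CARD('n) + 1) * r \<le> R"
  shows "uniform_limit (polydisc c r) (\<lambda>j. mderiv \<alpha> (fs j)) (mderiv \<alpha> f) sequentially"
proof (rule uniform_limitI)
  fix e :: real assume e: "0 < e"
  define C where "C = mi_fact \<alpha> / r ^ mi_abs \<alpha>"
  have C: "0 < C"
    using r mi_fact_pos[of \<alpha>] by (simp add: C_def)
  have "eventually (\<lambda>j. \<forall>z\<in>polydisc c R. dist (fs j z) (f z) < e / (2 * C)) sequentially"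
    using unif e C by (intro uniform_limitD) auto
  with fs show "eventually (\<lambda>j. \<forall>z\<in>polydisc c r. dist (mderiv \<alpha> (fs j) z) (mderiv \<alpha> f z) < e)
      sequentially"
  proof eventually_elim
    case (elim j)
    have "norm (mderiv \<alpha> (fs j) z - mderiv \<alpha> f z) \<le> mi_fact \<alpha> * (e / (2 * C)) / r ^ mi_abs \<alpha>"
      if "z \<in> polydisc c r" for z
      using elim that by (intro norm_mderiv_diff_le[OF _ f r(1) _ r(2)]) (auto simp: dist_norm less_imp_le)
    moreover have "mi_fact \<alpha> * (e / (2 * C)) / r ^ mi_abs \<alpha> < e"
      using e C by (simp add: C_def field_simps)
    ultimately show ?case
      by (simp add: dist_norm) (meson le_less_trans)
  qed
qed

lemma tendsto_uniform_limit_compose: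
  fixes g :: "nat \<Rightarrow> 'a::t2_space \<Rightarrow> 'b::metric_space"
  assumes "uniform_limit S g l sequentially" "isCont l c" "zs \<longlonglongrightarrow> c"
    "eventually (\<lambda>j. zs j \<in> S) sequentially"
  shows "(\<lambda>j. g j (zs j)) \<longlonglongrightarrow> l c"
proof (rule tendstoI)
  fix e :: real assume e: "0 < e"
  have "(\<lambda>j. l (zs j)) \<longlonglongrightarrow> l c"
    using assms(2,3) by (rule isCont_tendsto_compose)
  then have "eventually (\<lambda>j. dist (l (zs j)) (l c) < e / 2) sequentially"
    using e by (intro tendstoD) auto
  moreover have "eventually (\<lambda>j. \<forall>z\<in>S. dist (g j z) (l z) < e / 2) sequentially"
    using assms(1) e by (intro uniform_limitD) auto
  ultimately show "eventually (\<lambda>j. dist (g j (zs j)) (l c) < e) sequentially"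
    using assms(4)
  proof eventually_elim
    case (elim j)
    then show ?case
      using dist_triangle[of "g j (zs j)" "l c" "l (zs j)"] by fastforce
  qed
qed

lemma tendsto_mderiv:
  fixes c :: "complex^'n::finite" and R r :: real
  assumes fs: "eventually (\<lambda>j. sep_holomorphic_on (fs j) (polydisc c R)) sequentially"
    and f: "sep_holomorphic_on f (polydisc c R)"
    and unif: "uniform_limit (polydisc c R) fs f sequentially"
    and zs: "zs \<longlonglongrightarrow> c" and r: "0 < r" "(real CARD('n) + 1) * r \<le> R"
  shows "(\<lambda>j. mderiv \<alpha> (fs j) (zs j)) \<longlonglongrightarrow> mderiv \<alpha> f c"
proof (rule tendsto_uniform_limit_compose[OF uniform_limit_mderiv[OF fs f unif r] _ zs])
  have "0 \<le> real CARD('n) * r"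
    using r(1) by simp
  then have "polydisc c r \<subseteq> polydisc c R"
    using r(2) by (intro polydisc_mono) (simp add: distrib_right)
  moreover have "continuous_on (polydisc c R) (mderiv \<alpha> f)"
    using sep_holomorphic_on_mderiv[OF f] by (simp add: sep_holomorphic_on_def)
  ultimately show "isCont (mderiv \<alpha> f) c"
    using center_in_polydisc[OF r(1)] open_polydisc continuous_on_eq_continuous_at by blast
  show "eventually (\<lambda>j. zs j \<in> polydisc c r) sequentially"
    using zs open_polydisc center_in_polydisc[OF r(1)] by (rule topological_tendstoD)
qed

lemma eventually_norm_mderiv_le:
  fixes c :: "complex^'n::finite" and R r M :: real
  assumes fs: "eventually (\<lambda>j. sep_holomorphic_on (fs j) (polydisc c R)) sequentially"
    and unif: "uniform_limit (polydisc c R) fs f sequentially"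
    and M: "\<And>z. z \<in> polydisc c R \<Longrightarrow> norm (f z) \<le> M"
    and zs: "zs \<longlonglongrightarrow> c" and r: "0 < r" "(real CARD('n) + 1) * r \<le> R"
  shows "eventually (\<lambda>j. \<forall>\<alpha>. norm (mderiv \<alpha> (fs j) (zs j)) \<le> mi_fact \<alpha> * (M + 1) / r ^ mi_abs \<alpha>)
    sequentially"
proof -
  have "eventually (\<lambda>j. zs j \<in> polydisc c r) sequentially"
    using zs open_polydisc center_in_polydisc[OF r(1)] by (rule topological_tendstoD)
  moreover have "eventually (\<lambda>j. \<forall>z\<in>polydisc c R. dist (fs j z) (f z) < 1) sequentially"
    using unif by (intro uniform_limitD) auto
  ultimately show ?thesis
    using fs
  proof eventually_elim
    case (elim j)
    have "norm (fs j z) \<le> M + 1" if "z \<in> polydisc c R" for z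
    proof -
      have "dist (fs j z) (f z) < 1"
        using elim(2) that by blast
      then show ?thesis
        using M[OF that] norm_triangle_sub[of "fs j z" "f z"] unfolding dist_norm by linarith
    qed
    then show ?case
      using norm_mderiv_le[OF elim(3) _ r elim(1)] by blast
  qed
qed

section \<open>Termwise convergence of the functional series\<close>

lemma infsum_tail_bound:
  fixes g :: "'i \<Rightarrow> 'a::banach"
  assumes fin: "finite {x. h x \<le> N}" and w: "(\<lambda>x. norm (g x) * 2 ^ h x) summable_on UNIV"
  shows "norm ((\<Sum>\<^sub>\<infinity>x. g x) - sum g {x. h x \<le> N}) \<le> (\<Sum>\<^sub>\<infinity>x. norm (g x) * 2 ^ h x) / 2 ^ N"
proof -
  define T where "T = {x. h x \<le> N}"
  have norm_le: "norm (g x) \<le> norm (g x) * 2 ^ h x" for x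
    using mult_left_mono[of 1 "2 ^ h x" "norm (g x)"] by simp
  have "(\<lambda>x. norm (g x)) summable_on UNIV"
    using w norm_le by (rule summable_on_comparison_test) simp
  then have ns: "(\<lambda>x. norm (g x)) summable_on - T" and gs: "g summable_on UNIV"
    by (auto intro: summable_on_subset_banach[of _ UNIV] abs_summable_summable)
  then have "(\<Sum>\<^sub>\<infinity>x. g x) = infsum g (T \<union> - T)"
    by simp
  also have "\<dots> = infsum g T + infsum g (- T)"
    using summable_on_subset_banach[OF gs] by (intro infsum_Un_disjoint) auto
  finally have "norm ((\<Sum>\<^sub>\<infinity>x. g x) - sum g T) = norm (infsum g (- T))"
    using fin by (simp add: T_def)
  also have "\<dots> \<le> (\<Sum>\<^sub>\<infinity>x\<in>-T. norm (g x))"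
    using ns by (rule norm_infsum_bound)
  also have "\<dots> \<le> (\<Sum>\<^sub>\<infinity>x\<in>-T. norm (g x) * 2 ^ h x * (1 / 2 ^ N))"
  proof (rule infsum_mono[OF ns])
    show "(\<lambda>x. norm (g x) * 2 ^ h x * (1 / 2 ^ N)) summable_on - T"
      using summable_on_subset_banach[OF w] by (intro summable_on_cmult_left) simp
    fix x assume "x \<in> - T"
    then have "(2::real) ^ N \<le> 2 ^ h x"
      by (intro power_increasing) (auto simp: T_def)
    then show "norm (g x) \<le> norm (g x) * 2 ^ h x * (1 / 2 ^ N)"
      by (simp add: field_simps mult_left_mono)
  qed
  also have "\<dots> = (\<Sum>\<^sub>\<infinity>x\<in>-T. norm (g x) * 2 ^ h x) * (1 / 2 ^ N)"
    by (rule infsum_cmult_left')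
  also have "\<dots> \<le> (\<Sum>\<^sub>\<infinity>x. norm (g x) * 2 ^ h x) * (1 / 2 ^ N)"
    using w summable_on_subset_banach[OF w] by (intro mult_right_mono infsum_mono2) simp_all
  finally show ?thesis
    by (simp add: T_def)
qed

text \<open>Dominated convergence for unordered sums: the uniform bound on the 2^h-weighted sums makes
  the tails outside {h \<le> N} uniformly O(2^-N).\<close>

lemma tendsto_infsum_weighted:
  fixes a :: "nat \<Rightarrow> 'i \<Rightarrow> 'a::banach"
  assumes fin: "\<And>N. finite {x. h x \<le> N}"
    and lim: "\<And>x. (\<lambda>j. a j x) \<longlonglongrightarrow> b x"
    and bound: "eventually (\<lambda>j. (\<lambda>x. norm (a j x) * 2 ^ h x) summable_on UNIV \<and>
        (\<Sum>\<^sub>\<infinity>x. norm (a j x) * 2 ^ h x) \<le> B) sequentially"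
    and b: "(\<lambda>x. norm (b x) * 2 ^ h x) summable_on UNIV"
  shows "(\<lambda>j. \<Sum>\<^sub>\<infinity>x. a j x) \<longlonglongrightarrow> (\<Sum>\<^sub>\<infinity>x. b x)"
proof (rule tendstoI)
  fix e :: real assume e: "0 < e"
  define B' where "B' = (\<Sum>\<^sub>\<infinity>x. norm (b x) * 2 ^ h x)"
  have "(\<lambda>N. (max B 0 + B') / 2 ^ N) \<longlonglongrightarrow> 0"
    by (rule LIMSEQ_divide_realpow_zero) simp
  then have "eventually (\<lambda>N. (max B 0 + B') / 2 ^ N < e / 2) sequentially"
    using e by (intro order_tendstoD(2)) auto
  then obtain N where N: "(max B 0 + B') / 2 ^ N < e / 2"
    by (auto simp: eventually_sequentially)
  define T where "T = {x. h x \<le> N}"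
  have "(\<lambda>j. sum (a j) T) \<longlonglongrightarrow> sum b T"
    by (intro tendsto_sum lim)
  then have "eventually (\<lambda>j. dist (sum (a j) T) (sum b T) < e / 2) sequentially"
    using e by (intro tendstoD) auto
  with bound show "eventually (\<lambda>j. dist (\<Sum>\<^sub>\<infinity>x. a j x) (\<Sum>\<^sub>\<infinity>x. b x) < e) sequentially"
  proof eventually_elim
    case (elim j)
    have "norm ((\<Sum>\<^sub>\<infinity>x. a j x) - sum (a j) T) \<le> (\<Sum>\<^sub>\<infinity>x. norm (a j x) * 2 ^ h x) / 2 ^ N"
      unfolding T_def using elim(1) by (intro infsum_tail_bound fin) auto
    also have "\<dots> \<le> B / 2 ^ N"
      using elim(1) by (intro divide_right_mono) auto
    finally have tail_a: "norm ((\<Sum>\<^sub>\<infinity>x. a j x) - sum (a j) T) \<le> B / 2 ^ N" .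
    have tail_b: "norm ((\<Sum>\<^sub>\<infinity>x. b x) - sum b T) \<le> B' / 2 ^ N"
      using infsum_tail_bound[OF fin b] by (simp add: T_def B'_def)
    have "dist (\<Sum>\<^sub>\<infinity>x. a j x) (\<Sum>\<^sub>\<infinity>x. b x)
        \<le> norm ((\<Sum>\<^sub>\<infinity>x. a j x) - sum (a j) T) + dist (sum (a j) T) (sum b T)
          + norm ((\<Sum>\<^sub>\<infinity>x. b x) - sum b T)"
      using dist_triangle[of "\<Sum>\<^sub>\<infinity>x. a j x" "\<Sum>\<^sub>\<infinity>x. b x" "sum (a j) T"]
        dist_triangle[of "sum (a j) T" "\<Sum>\<^sub>\<infinity>x. b x" "sum b T"]
      by (simp add: dist_norm norm_minus_commute)
    moreover have "B / 2 ^ N + B' / 2 ^ N \<le> (max B 0 + B') / 2 ^ N"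
      by (simp add: add_divide_distrib[symmetric] divide_right_mono)
    ultimately show ?case
      using tail_a tail_b elim(2) N by linarith
  qed
qed

lemma finite_mi_abs_le: "finite {\<alpha>::'n::finite \<Rightarrow> nat. mi_abs \<alpha> \<le> N}"
proof (rule finite_subset)
  have "\<alpha> i \<le> mi_abs \<alpha>" for \<alpha> :: "'n \<Rightarrow> nat" and i
    unfolding mi_abs_def by (rule member_le_sum) auto
  then show "{\<alpha>::'n \<Rightarrow> nat. mi_abs \<alpha> \<le> N} \<subseteq> PiE UNIV (\<lambda>_. {..N})"
    by (auto simp: PiE_UNIV_domain intro: order_trans)
qed (simp add: finite_PiE)

lemma ell1_weighted_bound:
  fixes x d :: "('n::finite \<Rightarrow> nat) \<Rightarrow> complex" and M :: real
  assumes x: "x \<in> ell1" and r: "0 < r"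
    and d: "\<And>\<alpha>. norm (d \<alpha>) \<le> mi_fact \<alpha> * M / r ^ mi_abs \<alpha>"
  shows "(\<lambda>\<alpha>. norm (x \<alpha> * d \<alpha> / of_nat (mi_fact \<alpha>)) * 2 ^ mi_abs \<alpha>) summable_on UNIV"
    and "(\<Sum>\<^sub>\<infinity>\<alpha>. norm (x \<alpha> * d \<alpha> / of_nat (mi_fact \<alpha>)) * 2 ^ mi_abs \<alpha>)
      \<le> M * (\<Sum>\<^sub>\<infinity>\<alpha>. norm (x \<alpha>) * (2 / r) ^ mi_abs \<alpha>)"
proof -
  have xs: "(\<lambda>\<alpha>. norm (x \<alpha>) * (2 / r) ^ mi_abs \<alpha>) summable_on UNIV"
    using x r unfolding ell1_def by auto
  then have xsM: "(\<lambda>\<alpha>. M * (norm (x \<alpha>) * (2 / r) ^ mi_abs \<alpha>)) summable_on UNIV"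
    by (rule summable_on_cmult_right)
  have le: "norm (x \<alpha> * d \<alpha> / of_nat (mi_fact \<alpha>)) * 2 ^ mi_abs \<alpha>
      \<le> M * (norm (x \<alpha>) * (2 / r) ^ mi_abs \<alpha>)" for \<alpha>
  proof -
    have "norm (d \<alpha>) / mi_fact \<alpha> \<le> M / r ^ mi_abs \<alpha>"
      using d[of \<alpha>] mi_fact_pos[of \<alpha>] r by (simp add: divide_simps mult.commute)
    then have "norm (x \<alpha>) * (norm (d \<alpha>) / mi_fact \<alpha>) * 2 ^ mi_abs \<alpha>
        \<le> norm (x \<alpha>) * (M / r ^ mi_abs \<alpha>) * 2 ^ mi_abs \<alpha>"
      by (intro mult_right_mono mult_left_mono) auto
    then show ?thesis
      by (simp add: norm_mult norm_divide power_divide algebra_simps)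
  qed
  show sum: "(\<lambda>\<alpha>. norm (x \<alpha> * d \<alpha> / of_nat (mi_fact \<alpha>)) * 2 ^ mi_abs \<alpha>) summable_on UNIV"
    using xsM le by (rule summable_on_comparison_test) auto
  have "(\<Sum>\<^sub>\<infinity>\<alpha>. norm (x \<alpha> * d \<alpha> / of_nat (mi_fact \<alpha>)) * 2 ^ mi_abs \<alpha>)
      \<le> (\<Sum>\<^sub>\<infinity>\<alpha>. M * (norm (x \<alpha>) * (2 / r) ^ mi_abs \<alpha>))"
    using sum xsM le by (rule infsum_mono)
  also have "\<dots> = M * (\<Sum>\<^sub>\<infinity>\<alpha>. norm (x \<alpha>) * (2 / r) ^ mi_abs \<alpha>)"
    by (simp add: infsum_cmult_right')
  finally show "(\<Sum>\<^sub>\<infinity>\<alpha>. norm (x \<alpha> * d \<alpha> / of_nat (mi_fact \<alpha>)) * 2 ^ mi_abs \<alpha>)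
      \<le> M * (\<Sum>\<^sub>\<infinity>\<alpha>. norm (x \<alpha>) * (2 / r) ^ mi_abs \<alpha>)" .
qed

lemma tendsto_act:
  fixes xs ds :: "nat \<Rightarrow> ('n::finite \<Rightarrow> nat) \<Rightarrow> complex" and M B :: real
  assumes r: "0 < r" and x: "x \<in> ell1"
    and lim_x: "\<And>\<alpha>. (\<lambda>j. xs j \<alpha>) \<longlonglongrightarrow> x \<alpha>" and lim_d: "\<And>\<alpha>. (\<lambda>j. ds j \<alpha>) \<longlonglongrightarrow> d \<alpha>"
    and d: "\<And>\<alpha>. norm (d \<alpha>) \<le> mi_fact \<alpha> * M / r ^ mi_abs \<alpha>"
    and xs: "eventually (\<lambda>j. xs j \<in> ell1 \<and> (\<Sum>\<^sub>\<infinity>\<alpha>. norm (xs j \<alpha>) * (2 / r) ^ mi_abs \<alpha>) \<le> B) sequentially"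
    and ds: "eventually (\<lambda>j. \<forall>\<alpha>. norm (ds j \<alpha>) \<le> mi_fact \<alpha> * M / r ^ mi_abs \<alpha>) sequentially"
  shows "(\<lambda>j. \<Sum>\<^sub>\<infinity>\<alpha>. xs j \<alpha> * ds j \<alpha> / of_nat (mi_fact \<alpha>))
    \<longlonglongrightarrow> (\<Sum>\<^sub>\<infinity>\<alpha>. x \<alpha> * d \<alpha> / of_nat (mi_fact \<alpha>))"
proof (rule tendsto_infsum_weighted[where h = mi_abs and B = "M * B"
      and a = "\<lambda>j \<alpha>. xs j \<alpha> * ds j \<alpha> / of_nat (mi_fact \<alpha>)" and b = "\<lambda>\<alpha>. x \<alpha> * d \<alpha> / of_nat (mi_fact \<alpha>)"])
  have "0 \<le> M"
    using order_trans[OF norm_ge_zero d[of "\<lambda>_. 0"]] by (simp add: mi_fact_def mi_abs_def)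
  show "eventually (\<lambda>j. (\<lambda>\<alpha>. norm (xs j \<alpha> * ds j \<alpha> / of_nat (mi_fact \<alpha>)) * 2 ^ mi_abs \<alpha>) summable_on UNIV
      \<and> (\<Sum>\<^sub>\<infinity>\<alpha>. norm (xs j \<alpha> * ds j \<alpha> / of_nat (mi_fact \<alpha>)) * 2 ^ mi_abs \<alpha>) \<le> M * B) sequentially"
    using xs ds
  proof eventually_elim
    case (elim j)
    then have x: "xs j \<in> ell1" and d: "\<And>\<alpha>. norm (ds j \<alpha>) \<le> mi_fact \<alpha> * M / r ^ mi_abs \<alpha>"
      by auto
    have "M * (\<Sum>\<^sub>\<infinity>\<alpha>. norm (xs j \<alpha>) * (2 / r) ^ mi_abs \<alpha>) \<le> M * B"
      using elim(1) \<open>0 \<le> M\<close> by (intro mult_left_mono) auto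
    then show ?case
      using ell1_weighted_bound(1)[OF x r d] order_trans[OF ell1_weighted_bound(2)[OF x r d]] by blast
  qed
  show "(\<lambda>\<alpha>. norm (x \<alpha> * d \<alpha> / of_nat (mi_fact \<alpha>)) * 2 ^ mi_abs \<alpha>) summable_on UNIV"
    by (rule ell1_weighted_bound(1)[OF x r d])
  show "(\<lambda>j. xs j \<alpha> * ds j \<alpha> / of_nat (mi_fact \<alpha>)) \<longlonglongrightarrow> x \<alpha> * d \<alpha> / of_nat (mi_fact \<alpha>)"
    for \<alpha>
    using mi_fact_pos[of \<alpha>] by (intro tendsto_divide tendsto_mult lim_x lim_d tendsto_const) simp
qed (rule finite_mi_abs_le)

lemma cball_times_ball_in_open:
  fixes z0 :: "'a::metric_space" and w0 :: "'b::metric_space"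
  assumes "open \<Omega>" "(z0, w0) \<in> \<Omega>" "open V" "z0 \<in> V"
  obtains e where "0 < e" "cball z0 e \<subseteq> V" "\<And>z w. z \<in> cball z0 e \<Longrightarrow> w \<in> ball w0 e \<Longrightarrow> (z, w) \<in> \<Omega>"
proof -
  obtain A B where AB: "open A" "open B" "(z0, w0) \<in> A \<times> B" "A \<times> B \<subseteq> \<Omega>"
    using open_prod_elim[OF assms(1,2)] .
  obtain e1 where e1: "0 < e1" "cball z0 e1 \<subseteq> V \<inter> A"
    using open_contains_cball[of "V \<inter> A"] AB assms(3,4) by blast
  obtain e2 where e2: "0 < e2" "ball w0 e2 \<subseteq> B"
    using open_contains_ball[of B] AB by blast
  show thesis
  proof (rule that[of "min e1 e2"])
    show "(z, w) \<in> \<Omega>" if "z \<in> cball z0 (min e1 e2)" "w \<in> ball w0 (min e1 e2)" for z w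
      using that e1 e2 AB(4) by (auto simp: subset_iff)
  qed (use e1 e2 in auto)
qed

lemma polydisc_in_slices:
  fixes \<Omega> :: "((complex^'n::finite) \<times> 'm::metric_space) set"
  assumes "open \<Omega>" "(z0, w0) \<in> \<Omega>" "open V" "z0 \<in> V" "ws \<longlonglongrightarrow> w0"
  obtains R K where "0 < R" "compact K" "polydisc z0 R \<subseteq> K" "K \<subseteq> V"
    "eventually (\<lambda>j. polydisc z0 R \<subseteq> fst ` {x\<in>\<Omega>. snd x = ws j}) sequentially"
proof -
  obtain e where e: "0 < e" "cball z0 e \<subseteq> V" "\<And>z w. z \<in> cball z0 e \<Longrightarrow> w \<in> ball w0 e \<Longrightarrow> (z, w) \<in> \<Omega>"
    using cball_times_ball_in_open[OF assms(1-4)] by blast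
  define R where "R = e / CARD('n)"
  have PR: "polydisc z0 R \<subseteq> cball z0 e"
    using polydisc_subset_cball[of z0 R] by (simp add: R_def)
  have "eventually (\<lambda>j. ws j \<in> ball w0 e) sequentially"
    using assms(5) e(1) by (intro topological_tendstoD) auto
  then have "eventually (\<lambda>j. polydisc z0 R \<subseteq> fst ` {x\<in>\<Omega>. snd x = ws j}) sequentially"
  proof eventually_elim
    case (elim j)
    show ?case
    proof
      fix z assume "z \<in> polydisc z0 R"
      then have "(z, ws j) \<in> \<Omega>"
        using PR e(3) elim by blast
      then show "z \<in> fst ` {x\<in>\<Omega>. snd x = ws j}"
        by (auto intro!: image_eqI[where x = "(z, ws j)"])
    qed
  qed
  moreover have "0 < R"
    using e(1) by (simp add: R_def)
  ultimately show thesis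
    using that[OF _ compact_cball PR e(2)] by blast
qed

lemma mderiv_along_slices:
  fixes \<Omega> :: "((complex^'n::finite) \<times> 'm::metric_space) set"
  assumes "open \<Omega>" "(z0, w0) \<in> \<Omega>" "open V" "z0 \<in> V"
    and zs: "zs \<longlonglongrightarrow> z0" and ws: "ws \<longlonglongrightarrow> w0"
    and hol: "\<And>j. holo_on (fs j) (fst ` {x\<in>\<Omega>. snd x = ws j})" and holf: "holo_on f V"
    and unif: "\<And>K. compact K \<Longrightarrow> K \<subseteq> V \<Longrightarrow> uniform_limit K fs f sequentially"
  obtains r M :: real where "0 < r" "\<And>\<alpha>. (\<lambda>j. mderiv \<alpha> (fs j) (zs j)) \<longlonglongrightarrow> mderiv \<alpha> f z0"
    "\<And>\<alpha>. norm (mderiv \<alpha> f z0) \<le> mi_fact \<alpha> * M / r ^ mi_abs \<alpha>"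
    "eventually (\<lambda>j. \<forall>\<alpha>. norm (mderiv \<alpha> (fs j) (zs j)) \<le> mi_fact \<alpha> * M / r ^ mi_abs \<alpha>) sequentially"
proof -
  obtain R K where R: "0 < R" "compact K" "polydisc z0 R \<subseteq> K" "K \<subseteq> V"
    and slices: "eventually (\<lambda>j. polydisc z0 R \<subseteq> fst ` {x\<in>\<Omega>. snd x = ws j}) sequentially"
    using polydisc_in_slices[OF assms(1-4) ws] by blast
  define r where "r = R / (real CARD('n) + 1)"
  have "0 < real CARD('n) + 1"
    by simp
  then have r: "0 < r" "(real CARD('n) + 1) * r \<le> R"
    using R(1) by (simp_all add: r_def)
  have fs: "eventually (\<lambda>j. sep_holomorphic_on (fs j) (polydisc z0 R)) sequentially"
    using slices by eventually_elim (rule sep_holomorphic_on_subset[OF holo_on_imp_sep_holomorphic_on[OF hol]])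
  have f_V: "sep_holomorphic_on f V"
    by (rule holo_on_imp_sep_holomorphic_on[OF holf])
  then have f: "sep_holomorphic_on f (polydisc z0 R)"
    using subset_trans[OF R(3,4)] by (rule sep_holomorphic_on_subset)
  have unif_R: "uniform_limit (polydisc z0 R) fs f sequentially"
    using uniform_limit_on_subset[OF unif[OF R(2,4)] R(3)] .
  have "continuous_on K f"
    using f_V R(4) unfolding sep_holomorphic_on_def by (blast intro: continuous_on_subset)
  then have "compact (f ` K)"
    using R(2) by (rule compact_continuous_image)
  then obtain M where "\<forall>y\<in>f ` K. norm y \<le> M"
    using compact_imp_bounded[of "f ` K"] unfolding bounded_iff by auto
  then have f_bound: "\<And>z. z \<in> polydisc z0 R \<Longrightarrow> norm (f z) \<le> M"
    using R(3) by blast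
  then have "norm (f z) \<le> M + 1" if "z \<in> polydisc z0 R" for z
    using that by fastforce
  then have "norm (mderiv \<alpha> f z0) \<le> mi_fact \<alpha> * (M + 1) / r ^ mi_abs \<alpha>" for \<alpha>
    by (rule norm_mderiv_le[OF f _ r center_in_polydisc[OF r(1)]])
  then show thesis
    by (rule that[OF r(1) tendsto_mderiv[OF fs f unif_R zs r] _
          eventually_norm_mderiv_le[OF fs unif_R f_bound zs r]])
qed

theorem mainTheorem4:
  fixes \<Omega> :: "((complex^'n::finite) \<times> (complex^'m::finite)) set"
    and \<xi> :: "complex^'m \<Rightarrow> ('n \<Rightarrow> nat) \<Rightarrow> complex"
    and z0 :: "complex^'n" and w0 :: "complex^'m"
    and V :: "(complex^'n) set"
    and zw :: "nat \<Rightarrow> (complex^'n) \<times> (complex^'m)"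
    and fs :: "nat \<Rightarrow> complex^'n \<Rightarrow> complex"
    and f :: "complex^'n \<Rightarrow> complex"
  assumes dom: "open \<Omega>" "connected \<Omega>" "\<Omega> \<noteq> {}"
    and ell: "\<forall>w\<in>snd ` \<Omega>. \<xi> w \<in> ell1"
    and w0D: "w0 \<in> snd ` \<Omega>"
    and lub: "loc_unif_bdd \<xi> (snd ` \<Omega>) w0"
    and cont: "\<forall>\<alpha>. continuous (at w0 within snd ` \<Omega>) (\<lambda>w. \<xi> w \<alpha>)"
    and pt0: "(z0, w0) \<in> \<Omega>"
    and V: "open V" "compact (closure V)" "closure V \<subseteq> fst ` {x\<in>\<Omega>. snd x = w0}"
    and z0V: "z0 \<in> V"
    and seq: "\<forall>j. zw j \<in> \<Omega> \<and> fst (zw j) \<in> V"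
    and lim: "zw \<longlonglongrightarrow> (z0, w0)"
    and hol: "\<forall>j. holo_on (fs j) (fst ` {x\<in>\<Omega>. snd x = snd (zw j)})"
    and holf: "holo_on f V"
    and unif: "\<forall>K. compact K \<and> K \<subseteq> V \<longrightarrow> uniform_limit K fs f sequentially"
  shows "(\<lambda>j. act (\<xi> (snd (zw j))) (fs j) (fst (zw j))) \<longlonglongrightarrow> act (\<xi> w0) f z0"
proof -
  have zs: "(\<lambda>j. fst (zw j)) \<longlonglongrightarrow> z0" and ws: "(\<lambda>j. snd (zw j)) \<longlonglongrightarrow> w0"
    using tendsto_fst[OF lim] tendsto_snd[OF lim] by simp_all
  obtain r M :: real where r: "0 < r"
    and lim_d: "\<And>\<alpha>. (\<lambda>j. mderiv \<alpha> (fs j) (fst (zw j))) \<longlonglongrightarrow> mderiv \<alpha> f z0"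
    and d: "\<And>\<alpha>. norm (mderiv \<alpha> f z0) \<le> mi_fact \<alpha> * M / r ^ mi_abs \<alpha>"
    and ds: "eventually (\<lambda>j. \<forall>\<alpha>. norm (mderiv \<alpha> (fs j) (fst (zw j))) \<le> mi_fact \<alpha> * M / r ^ mi_abs \<alpha>)
      sequentially"
    using mderiv_along_slices[OF dom(1) pt0 V(1) z0V zs ws hol[rule_format] holf
        unif[rule_format, OF conjI]] by blast
  have w_D: "snd (zw j) \<in> snd ` \<Omega>" for j
    using seq by simp
  obtain V' B where V': "open V'" "w0 \<in> V'"
    "\<And>w. w \<in> V' \<inter> snd ` \<Omega> \<Longrightarrow> (\<Sum>\<^sub>\<infinity>\<alpha>. norm (\<xi> w \<alpha>) * (2 / r) ^ mi_abs \<alpha>) \<le> B"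
    using lub r unfolding loc_unif_bdd_def by (meson divide_pos_pos zero_less_numeral)
  have "eventually (\<lambda>j. snd (zw j) \<in> V') sequentially"
    using ws V'(1,2) by (rule topological_tendstoD)
  then have xs: "eventually (\<lambda>j. \<xi> (snd (zw j)) \<in> ell1
      \<and> (\<Sum>\<^sub>\<infinity>\<alpha>. norm (\<xi> (snd (zw j)) \<alpha>) * (2 / r) ^ mi_abs \<alpha>) \<le> B) sequentially"
    by eventually_elim (use ell w_D V'(3) in blast)
  have lim_x: "(\<lambda>j. \<xi> (snd (zw j)) \<alpha>) \<longlonglongrightarrow> \<xi> w0 \<alpha>" for \<alpha>
    using continuous_within_tendsto_compose'[OF cont[rule_format] w_D ws] .
  show ?thesis
    unfolding act_def by (rule tendsto_act[OF r ell[rule_format, OF w0D] lim_x lim_d d xs ds])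
qed

end
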